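(* Let $S$ be a Polish space and let $c:S\times S\to[0,\infty)$ satisfy (a) $c(x,x)=0$ for all $x\in S$; (b) $c(x,z)\le c(x,y)+c(y,z)$ for all $x,y,z\in S$; (c) there exist lower semicontinuous functions $c_n:S\times S\to[0,\infty)$, $n\in\mathbb N$, with $c_n\downarrow c$ pointwise as $n\to\infty$ (i.e. $c_n$ non-increasing in $n$ and converging pointwise to $c$). Then for all Borel probability measures $\mu,\nu$ on $S$, \[ \sup\Big\{\int_S\phi\,d\mu+\int_S\psi\,d\nu:\ \phi,\psi\in b\mathcal B(S),\ \phi(x)+\psi(y)\le c(x,y)\ \forall x,y\in S\Big\} =\sup\Big\{\int_S\phi\,d\mu-\int_S\phi\,d\nu:\ \phi\in b\mathcal B(S),\ \phi(x)-\phi(y)\le c(x,y)\ \forall x,y\in S\Big\}. \]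
   Context: $b\mathcal{B}(S)$ denotes the set of all bounded Borel measurable functions $S\to\mathbb{R}$. *)

theory Defs
  imports "HOL-Probability.Probability"
begin

definition lsc :: "('a::topological_space \<Rightarrow> real) \<Rightarrow> bool" where
  "lsc f \<longleftrightarrow> (\<forall>t. open {x. t < f x})"

definition bB :: "('a::topological_space \<Rightarrow> real) set" where
  "bB = {f. f \<in> borel_measurable borel \<and> bounded (range f)}"

end

theory Submission imports Defs begin

text \<open>The inequality \<open>\<ge>\<close> is trivial: take \<open>\<psi> = -\<phi>\<close>. For \<open>\<le>\<close>, fix an admissible pair \<open>(\<phi>, \<psi>)\<close>
  bounded by \<open>M\<close> and approximate \<open>\<psi>\<close> from below by a staircase: a compact set \<open>D \<subseteq> S \<times> \<real>\<close>
  with \<open>s \<le> \<psi> y\<close> for \<open>(y, s) \<in> D\<close>, and \<open>\<psi> y < s + \<delta>\<close> for some \<open>(y, s) \<in> D\<close> outside a set of small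
  \<open>\<nu>\<close>-measure (inner regularity of \<open>\<nu>\<close> on the Polish space \<open>S\<close>). The envelope
  \<open>G x = min M (inf {c (x, y) - s | (y, s) \<in> D})\<close> is \<open>c\<close>-Lipschitz by the triangle inequality,
  dominates \<open>\<phi>\<close>, and satisfies \<open>G y \<le> -s\<close> on \<open>D\<close>, so that
  \<open>\<integral>\<phi> d\<mu> + \<integral>\<psi> d\<nu> \<le> \<integral>G d\<mu> - \<integral>G d\<nu> + \<epsilon>\<close>. Compactness of \<open>D\<close> makes the envelope of each
  lower semicontinuous \<open>c\<^sub>n\<close> lower semicontinuous, and \<open>G\<close> is the infimum of these, hence Borel.\<close>

lemma lsc_imp_borel_measurable: "lsc f \<Longrightarrow> f \<in> borel_measurable borel"
  unfolding lsc_def borel_measurable_iff_greater by auto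

lemma continuous_imp_lsc: "continuous_on UNIV f \<Longrightarrow> lsc f"
  unfolding lsc_def by (auto intro: open_Collect_less continuous_on_const)

lemma lsc_compose_continuous:
  assumes f: "lsc f" and g: "continuous_on UNIV g"
  shows "lsc (\<lambda>x. f (g x))"
  unfolding lsc_def
proof
  fix t
  have "open (g -` {y. t < f y})"
    using f g unfolding lsc_def by (intro open_vimage) auto
  then show "open {x. t < f (g x)}" by (simp add: vimage_def)
qed

lemma lsc_add:
  assumes f: "lsc f" and g: "lsc g"
  shows "lsc (\<lambda>x. f x + g x)"
  unfolding lsc_def
proof
  fix t
  have "{x. t < f x + g x} = (\<Union>r. {x. r < f x} \<inter> {x. t - r < g x})"
  proof (intro equalityI subsetI)
    fix x assume "x \<in> {x. t < f x + g x}"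
    then have "t - g x < f x" by simp
    then obtain r where "t - g x < r" "r < f x" using dense by blast
    then show "x \<in> (\<Union>r. {x. r < f x} \<inter> {x. t - r < g x})" by auto
  qed auto
  moreover have "open (\<Union>r. {x. r < f x} \<inter> {x. t - r < g x})"
    using f g unfolding lsc_def by (intro open_UN open_Int ballI) auto
  ultimately show "open {x. t < f x + g x}" by simp
qed

lemma lsc_Inf_compact:
  fixes F :: "'a::topological_space \<times> 'b::topological_space \<Rightarrow> real"
  assumes F: "lsc F" and D: "compact D" and lower: "\<And>x y. y \<in> D \<Longrightarrow> L \<le> F (x, y)"
  shows "lsc (\<lambda>x. Inf (insert M ((\<lambda>y. F (x, y)) ` D)))"
  unfolding lsc_def
proof (intro allI Topological_Spaces.openI)
  let ?G = "\<lambda>x. Inf (insert M ((\<lambda>y. F (x, y)) ` D))"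
  fix t x0 assume "x0 \<in> {x. t < ?G x}"
  then obtain s where s: "t < s" "s < ?G x0" using dense by auto
  have bdd: "bdd_below (insert M ((\<lambda>y. F (x, y)) ` D))" for x
    using lower by (intro bdd_belowI[of _ "min M L"]) (auto simp: min.coboundedI2)
  have "{x0} \<times> D \<subseteq> {p. s < F p}"
    using s(2) cInf_lower[OF _ bdd, of "F (x0, _)" x0] by fastforce
  then obtain X0 where X0: "x0 \<in> X0" "open X0" "X0 \<times> D \<subseteq> {p. s < F p}"
    using Elementary_Topology.tube_lemma[OF D] F unfolding lsc_def by metis
  have "s \<le> ?G x" if "x \<in> X0" for x
  proof (rule cInf_greatest)
    show "s \<le> v" if "v \<in> insert M ((\<lambda>y. F (x, y)) ` D)" for v
      using that s(2) cInf_lower[OF _ bdd, of M x0] X0(3) \<open>x \<in> X0\<close> by fastforce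
  qed simp
  then show "\<exists>T. open T \<and> x0 \<in> T \<and> T \<subseteq> {x. t < ?G x}"
    using X0 s(1) by (intro exI[of _ X0]) force
qed

lemma bdd_above_snd_compact: "compact (D :: ('a::metric_space \<times> real) set) \<Longrightarrow> bdd_above (snd ` D)"
  by (intro bounded_imp_bdd_above bounded_snd compact_imp_bounded)

text \<open>For a nonnegative \<open>c\<close> satisfying the triangle inequality and vanishing on the diagonal, this is
  the largest \<open>c\<close>-Lipschitz function bounded by \<open>M\<close> and by \<open>-s\<close> at \<open>y\<close> whenever \<open>(y, s) \<in> D\<close>.\<close>
definition lip_envelope :: "real \<Rightarrow> ('a \<times> 'a \<Rightarrow> real) \<Rightarrow> ('a \<times> real) set \<Rightarrow> 'a \<Rightarrow> real" where
  "lip_envelope M c D x = Inf (insert M ((\<lambda>(y, s). c (x, y) - s) ` D))"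

lemma bdd_below_lip_envelope_set:
  fixes c :: "'a \<times> 'a \<Rightarrow> real"
  assumes c_nonneg: "\<And>x y. 0 \<le> c (x, y)" and bdd: "bdd_above (snd ` D)"
  shows "bdd_below (insert M ((\<lambda>(y, s). c (x, y) - s) ` D))"
proof -
  obtain b where b: "\<And>y s. (y, s) \<in> D \<Longrightarrow> s \<le> b"
    using bdd by (force simp: bdd_above_def)
  show ?thesis
  proof (rule bdd_belowI[of _ "min M (- b)"])
    fix v assume "v \<in> insert M ((\<lambda>(y, s). c (x, y) - s) ` D)"
    then consider "v = M" | y s where "(y, s) \<in> D" "v = c (x, y) - s" by auto
    then show "min M (- b) \<le> v"
    proof cases
      case (2 y s)
      then have "- b \<le> v" using b[of y s] c_nonneg[of x y] by linarith
      then show ?thesis by (simp add: min.coboundedI2)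
    qed simp
  qed
qed

lemma lip_envelope_le_cap:
  assumes "\<And>x y. 0 \<le> c (x, y)" "bdd_above (snd ` D)"
  shows "lip_envelope M c D x \<le> M"
  unfolding lip_envelope_def by (intro cInf_lower bdd_below_lip_envelope_set assms) auto

lemma lip_envelope_le:
  assumes "\<And>x y. 0 \<le> c (x, y)" "bdd_above (snd ` D)" "(y, s) \<in> D"
  shows "lip_envelope M c D x \<le> c (x, y) - s"
  unfolding lip_envelope_def using assms(3) by (intro cInf_lower bdd_below_lip_envelope_set assms(1,2)) force

lemma le_lip_envelope:
  assumes "a \<le> M" "\<And>y s. (y, s) \<in> D \<Longrightarrow> a \<le> c (x, y) - s"
  shows "a \<le> lip_envelope M c D x"
  unfolding lip_envelope_def using assms by (intro cInf_greatest) auto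

lemma lip_envelope_at_support:
  assumes "\<And>x y. 0 \<le> c (x, y)" "bdd_above (snd ` D)" "c (y, y) = 0" "(y, s) \<in> D"
  shows "lip_envelope M c D y \<le> - s"
  using lip_envelope_le[where c = c, OF assms(1,2,4), of M y] assms(3) by simp

lemma lip_envelope_lipschitz:
  assumes c_nonneg: "\<And>x y. 0 \<le> c (x, y)" and c_tri: "\<And>x y z. c (x, z) \<le> c (x, y) + c (y, z)"
    and bdd: "bdd_above (snd ` D)"
  shows "lip_envelope M c D x - lip_envelope M c D x' \<le> c (x, x')"
proof -
  have "lip_envelope M c D x - c (x, x') \<le> lip_envelope M c D x'"
  proof (rule le_lip_envelope)
    show "lip_envelope M c D x - c (x, x') \<le> M"
      using lip_envelope_le_cap[where c = c, OF c_nonneg bdd, of M x] c_nonneg[of x x'] by linarith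
    fix y s assume "(y, s) \<in> D"
    then show "lip_envelope M c D x - c (x, x') \<le> c (x', y) - s"
      using lip_envelope_le[where c = c, OF c_nonneg bdd, of y s M x] c_tri[where x = x and y = x' and z = y]
      by linarith
  qed
  then show ?thesis by linarith
qed

lemma lip_envelope_eq_INF:
  fixes c :: "'a \<times> 'a \<Rightarrow> real" and cn :: "nat \<Rightarrow> 'a \<times> 'a \<Rightarrow> real"
  assumes c_nonneg: "\<And>x y. 0 \<le> c (x, y)" and bdd: "bdd_above (snd ` D)"
    and c_le_cn: "\<And>n p. c p \<le> cn n p" and cn_lim: "\<And>p. (\<lambda>n. cn n p) \<longlonglongrightarrow> c p"
  shows "lip_envelope M c D x = (INF n. lip_envelope M (cn n) D x)"
proof -
  have cn_nonneg: "0 \<le> cn n (x, y)" for n x y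
    using c_nonneg[of x y] c_le_cn[of "(x, y)" n] by linarith
  have mono: "lip_envelope M c D x \<le> lip_envelope M (cn n) D x" for n
  proof (rule le_lip_envelope)
    show "lip_envelope M c D x \<le> M" by (rule lip_envelope_le_cap[where c = c, OF c_nonneg bdd])
    fix y s assume "(y, s) \<in> D"
    then show "lip_envelope M c D x \<le> cn n (x, y) - s"
      using lip_envelope_le[where c = c, OF c_nonneg bdd, of y s M x] c_le_cn[of "(x, y)" n] by linarith
  qed
  have INF_le: "(INF n. lip_envelope M (cn n) D x) \<le> lip_envelope M (cn n) D x" for n
    using mono by (intro cINF_lower bdd_belowI2) auto
  show ?thesis
  proof (rule antisym)
    show "lip_envelope M c D x \<le> (INF n. lip_envelope M (cn n) D x)"
      using mono by (intro cINF_greatest) auto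
    show "(INF n. lip_envelope M (cn n) D x) \<le> lip_envelope M c D x"
    proof (rule le_lip_envelope)
      show "(INF n. lip_envelope M (cn n) D x) \<le> M"
        using INF_le[of 0] lip_envelope_le_cap[where c = "cn 0", OF cn_nonneg bdd, of M x] by linarith
      fix y s assume ys: "(y, s) \<in> D"
      show "(INF n. lip_envelope M (cn n) D x) \<le> c (x, y) - s"
      proof (rule field_le_epsilon)
        fix r :: real assume "0 < r"
        obtain n where "norm (cn n (x, y) - c (x, y)) < r"
          using LIMSEQ_D[OF cn_lim \<open>0 < r\<close>] by blast
        then have "cn n (x, y) < c (x, y) + r" by (simp add: abs_less_iff)
        then show "(INF n. lip_envelope M (cn n) D x) \<le> c (x, y) - s + r"
          using INF_le[of n] lip_envelope_le[where c = "cn n", OF cn_nonneg bdd ys, of M x] by linarith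
      qed
    qed
  qed
qed

lemma lsc_lip_envelope:
  fixes c :: "'a::metric_space \<times> 'a \<Rightarrow> real"
  assumes c: "lsc c" and c_nonneg: "\<And>x y. 0 \<le> c (x, y)" and D: "compact D"
  shows "lsc (lip_envelope M c D)"
proof -
  obtain b where b: "\<And>q. q \<in> D \<Longrightarrow> snd q \<le> b"
    using bdd_above_snd_compact[OF D] by (auto simp: bdd_above_def)
  have F: "lsc (\<lambda>p::'a \<times> 'a \<times> real. c (fst p, fst (snd p)) + - snd (snd p))"
    by (intro lsc_add lsc_compose_continuous[OF c] continuous_imp_lsc continuous_intros)
  have lower: "- b \<le> c (x, fst q) + - snd q" if "q \<in> D" for x q
    using b[OF that] c_nonneg[of x "fst q"] by linarith
  have "lsc (\<lambda>x. Inf (insert M ((\<lambda>q. c (x, fst q) + - snd q) ` D)))"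
    using lsc_Inf_compact[OF F D, where L = "- b" and M = M] lower by simp
  moreover have "(\<lambda>(y, s). c (x, y) - s) = (\<lambda>q. c (x, fst q) + - snd q)" for x
    by auto
  ultimately show ?thesis
    unfolding lip_envelope_def[abs_def] by simp
qed

lemma borel_measurable_lip_envelope:
  fixes c :: "'a::metric_space \<times> 'a \<Rightarrow> real" and cn :: "nat \<Rightarrow> 'a \<times> 'a \<Rightarrow> real"
  assumes c_nonneg: "\<And>x y. 0 \<le> c (x, y)" and D: "compact D"
    and cn_lsc: "\<And>n. lsc (cn n)" and c_le_cn: "\<And>n p. c p \<le> cn n p"
    and cn_lim: "\<And>p. (\<lambda>n. cn n p) \<longlonglongrightarrow> c p"
  shows "lip_envelope M c D \<in> borel_measurable borel"
proof -
  have cn_nonneg: "0 \<le> cn n (x, y)" for n x y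
    using c_nonneg[of x y] c_le_cn[of "(x, y)" n] by linarith
  have "(\<lambda>x. INF n. lip_envelope M (cn n) D x) \<in> borel_measurable borel"
    by (intro borel_measurable_cINF_real lsc_imp_borel_measurable lsc_lip_envelope cn_lsc cn_nonneg D)
      auto
  moreover have "lip_envelope M c D = (\<lambda>x. INF n. lip_envelope M (cn n) D x)"
    by (intro ext lip_envelope_eq_INF[where c = c, OF c_nonneg bdd_above_snd_compact[OF D] c_le_cn cn_lim])
  ultimately show ?thesis by simp
qed

lemma bB_boundE:
  assumes "f \<in> bB"
  obtains B where "0 < B" "\<And>x. \<bar>f x\<bar> \<le> B"
proof -
  from assms obtain a where "\<forall>y\<in>range f. norm y \<le> a"
    unfolding bB_def bounded_iff by auto
  then show ?thesis
    using that[of "max 1 a"] by (simp add: max.coboundedI2)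
qed

lemma bBI: "f \<in> borel_measurable borel \<Longrightarrow> (\<And>x. \<bar>f x\<bar> \<le> B) \<Longrightarrow> f \<in> bB"
  unfolding bB_def bounded_iff by auto

lemma uminus_bB: "f \<in> bB \<Longrightarrow> (\<lambda>x. - f x) \<in> bB"
  unfolding bB_def bounded_iff by auto

lemma bB_integrable:
  assumes "finite_measure M" "sets M = sets borel" "f \<in> bB"
  shows "integrable M f"
proof -
  obtain B where "\<And>x. \<bar>f x\<bar> \<le> B" using bB_boundE[OF assms(3)] by blast
  moreover have "f \<in> borel_measurable M"
    using assms(3) unfolding measurable_cong_sets[OF assms(2) refl] by (simp add: bB_def)
  ultimately show ?thesis
    by (intro finite_measure.integrable_const_bound[OF assms(1), of _ B]) auto
qed

lemma (in prob_space) integral_le_const_plus_indicator: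
  assumes f: "integrable M f" and U: "U \<in> events"
    and le: "\<And>x. x \<in> space M \<Longrightarrow> f x \<le> a + b * indicator U x"
  shows "integral\<^sup>L M f \<le> a + b * prob U"
proof -
  have int: "integrable M (\<lambda>x. b * indicator U x :: real)"
    using U by (intro integrable_mult_right integrable_real_indicator) (auto simp: emeasure_eq_measure)
  have "integral\<^sup>L M f \<le> integral\<^sup>L M (\<lambda>x. a + b * indicator U x)"
    using f int le by (intro integral_mono) auto
  also have "\<dots> = a + b * prob U"
    using int U by (simp add: prob_space)
  finally show ?thesis .
qed

lemma compact_subset_measure_Diff_less:
  fixes \<nu> :: "'a::polish_space measure"
  assumes "finite_measure \<nu>" "sets \<nu> = sets borel" "A \<in> sets borel" "0 < \<eta>"
  obtains C where "C \<subseteq> A" "compact C" "measure \<nu> (A - C) < \<eta>"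
proof -
  interpret finite_measure \<nu> by fact
  have A: "A \<in> sets \<nu>" using assms by simp
  show ?thesis
  proof (cases "measure \<nu> A < \<eta>")
    case True
    then show ?thesis using that[of "{}"] by simp
  next
    case False
    have "ennreal (measure \<nu> A - \<eta>) < ennreal (measure \<nu> A)"
      using False assms(4) by (intro ennreal_lessI) auto
    also have "\<dots> = (SUP K \<in> {K. K \<subseteq> A \<and> compact K}. emeasure \<nu> K)"
      using inner_regular[OF assms(2) _ assms(3)] by (simp add: emeasure_eq_measure)
    finally obtain C where C: "C \<subseteq> A" "compact C" "ennreal (measure \<nu> A - \<eta>) < emeasure \<nu> C"
      unfolding less_SUP_iff by auto
    have "C \<in> sets \<nu>" using C(2) assms(2) by (simp add: compact_imp_closed borel_closed)
    moreover have "measure \<nu> A - \<eta> < measure \<nu> C"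
      using C(3) False assms(4) by (simp add: emeasure_eq_measure ennreal_less_iff)
    ultimately show ?thesis
      using that[OF C(1,2)] finite_measure_Diff[OF A _ C(1)] by simp
  qed
qed

text \<open>Inner regularity applied to the finitely many superlevel sets \<open>{y. t\<^sub>k \<le> \<psi> y}\<close>,
  \<open>t\<^sub>k = -M + k \<delta>\<close>, of \<open>\<psi>\<close>: \<open>D\<close> collects the points \<open>(y, t\<^sub>k)\<close> for \<open>y\<close> in a compact subset
  of the \<open>k\<close>-th level set.\<close>
lemma compact_staircase_below:
  fixes \<nu> :: "'a::polish_space measure" and \<psi> :: "'a \<Rightarrow> real"
  assumes \<nu>: "finite_measure \<nu>" "sets \<nu> = sets borel"
    and \<psi>: "\<psi> \<in> borel_measurable borel" "\<And>y. \<bar>\<psi> y\<bar> \<le> M"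
    and "0 < \<delta>" "0 < \<eta>"
  obtains D U where "compact D" "\<And>y s. (y, s) \<in> D \<Longrightarrow> s \<le> \<psi> y"
    "U \<in> sets borel" "measure \<nu> U \<le> \<eta>" "\<And>y. y \<notin> U \<Longrightarrow> \<exists>s. (y, s) \<in> D \<and> \<psi> y < s + \<delta>"
proof -
  interpret finite_measure \<nu> by fact
  define N where "N = nat \<lceil>2 * M / \<delta>\<rceil>"
  define t where "t k = - M + real k * \<delta>" for k :: nat
  define A where "A k = {y. t k \<le> \<psi> y}" for k
  have A: "A k \<in> sets borel" for k
    unfolding A_def using \<psi>(1) by measurable
  have "0 < \<eta> / (N + 1)" using \<open>0 < \<eta>\<close> by simp
  then have "\<exists>C. C \<subseteq> A k \<and> compact C \<and> measure \<nu> (A k - C) < \<eta> / (N + 1)" for k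
    by (rule compact_subset_measure_Diff_less[OF \<nu> A]) blast
  then obtain C where C: "\<And>k. C k \<subseteq> A k" "\<And>k. compact (C k)"
    "\<And>k. measure \<nu> (A k - C k) < \<eta> / (N + 1)"
    by metis
  define D where "D = (\<Union>k\<le>N. C k \<times> {t k})"
  define U where "U = (\<Union>k\<le>N. A k - C k)"
  have "compact D"
    unfolding D_def by (intro compact_UN compact_Times C compact_sing) auto
  moreover have "s \<le> \<psi> y" if "(y, s) \<in> D" for y s
    using that C(1) by (auto simp: D_def A_def)
  moreover have "U \<in> sets borel"
    unfolding U_def using A C(2) by (auto intro!: sets.Diff simp: compact_imp_closed borel_closed)
  moreover have "measure \<nu> U \<le> \<eta>"
  proof -
    have "measure \<nu> U \<le> (\<Sum>k\<le>N. measure \<nu> (A k - C k))"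
      unfolding U_def using A C(2) \<nu>(2)
      by (intro finite_measure_subadditive_finite) (auto intro!: sets.Diff simp: compact_imp_closed borel_closed)
    also have "\<dots> \<le> (\<Sum>k\<le>N. \<eta> / (N + 1))"
      using C(3) by (intro sum_mono less_imp_le)
    finally show ?thesis by simp
  qed
  moreover have "\<exists>s. (y, s) \<in> D \<and> \<psi> y < s + \<delta>" if "y \<notin> U" for y
  proof -
    define k where "k = nat \<lfloor>(\<psi> y + M) / \<delta>\<rfloor>"
    have "0 \<le> (\<psi> y + M) / \<delta>" using \<psi>(2)[of y] \<open>0 < \<delta>\<close> by auto
    then have k: "real k \<le> (\<psi> y + M) / \<delta>" "(\<psi> y + M) / \<delta> < real k + 1"
      unfolding k_def by linarith+
    have "(\<psi> y + M) / \<delta> \<le> 2 * M / \<delta>"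
      using \<psi>(2)[of y] \<open>0 < \<delta>\<close> by (auto simp: divide_right_mono)
    then have "k \<le> N"
      unfolding k_def N_def by (meson ceiling_mono le_nat_iff nat_mono floor_le_ceiling order.trans ceiling_le_iff)
    moreover have "t k \<le> \<psi> y" "\<psi> y < t k + \<delta>"
      using k \<open>0 < \<delta>\<close> by (simp_all add: t_def field_simps)
    ultimately have "(y, t k) \<in> D"
      using \<open>y \<notin> U\<close> by (auto simp: D_def U_def A_def)
    with \<open>\<psi> y < t k + \<delta>\<close> show ?thesis by blast
  qed
  ultimately show ?thesis using that by blast
qed

lemma SUP_le_SUP_epsilon:
  fixes f :: "'a \<Rightarrow> ereal" and g :: "'b \<Rightarrow> ereal"
  assumes "\<And>a \<epsilon>. a \<in> A \<Longrightarrow> 0 < \<epsilon> \<Longrightarrow> \<exists>b\<in>B. f a \<le> g b + ereal \<epsilon>"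
  shows "(SUP a\<in>A. f a) \<le> (SUP b\<in>B. g b)"
proof (rule SUP_least)
  fix a assume "a \<in> A"
  show "f a \<le> (SUP b\<in>B. g b)"
  proof (rule ereal_le_epsilon2)
    fix \<epsilon> :: real assume "0 < \<epsilon>"
    then obtain b where "b \<in> B" "f a \<le> g b + ereal \<epsilon>"
      using assms \<open>a \<in> A\<close> by blast
    then show "f a \<le> (SUP b\<in>B. g b) + ereal \<epsilon>"
      by (meson SUP_upper add_right_mono order_trans)
  qed
qed

lemma admissible_pair_le_lipschitz_potential:
  fixes c :: "'a::polish_space \<times> 'a \<Rightarrow> real" and cn :: "nat \<Rightarrow> 'a \<times> 'a \<Rightarrow> real"
    and \<mu> \<nu> :: "'a measure"
  assumes c_nonneg: "\<And>x y. 0 \<le> c (x, y)" and c_diag: "\<And>x. c (x, x) = 0"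
    and c_tri: "\<And>x y z. c (x, z) \<le> c (x, y) + c (y, z)"
    and cn_lsc: "\<And>n. lsc (cn n)" and c_le_cn: "\<And>n p. c p \<le> cn n p"
    and cn_lim: "\<And>p. (\<lambda>n. cn n p) \<longlonglongrightarrow> c p"
    and \<mu>: "finite_measure \<mu>" "sets \<mu> = sets borel"
    and \<nu>: "prob_space \<nu>" "sets \<nu> = sets borel"
    and \<phi>: "\<phi> \<in> bB" and \<psi>: "\<psi> \<in> bB" and admissible: "\<And>x y. \<phi> x + \<psi> y \<le> c (x, y)"
    and "0 < \<epsilon>"
  obtains G where "G \<in> bB" "\<And>x y. G x - G y \<le> c (x, y)"
    "integral\<^sup>L \<mu> \<phi> + integral\<^sup>L \<nu> \<psi> \<le> integral\<^sup>L \<mu> G - integral\<^sup>L \<nu> G + \<epsilon>"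
proof -
  interpret \<nu>: prob_space \<nu> by fact
  obtain B1 B2 where B: "0 < B1" "\<And>x. \<bar>\<phi> x\<bar> \<le> B1" "0 < B2" "\<And>x. \<bar>\<psi> x\<bar> \<le> B2"
    using bB_boundE[OF \<phi>] bB_boundE[OF \<psi>] by metis
  define M where "M = max B1 B2"
  have M: "0 < M" "\<And>x. \<bar>\<phi> x\<bar> \<le> M" "\<And>x. \<bar>\<psi> x\<bar> \<le> M"
    using B unfolding M_def by (auto intro: max.coboundedI1 max.coboundedI2)
  obtain D U where D: "compact D" "\<And>y s. (y, s) \<in> D \<Longrightarrow> s \<le> \<psi> y"
    and U: "U \<in> sets borel" "measure \<nu> U \<le> \<epsilon> / (4 * M)"
    and near: "\<And>y. y \<notin> U \<Longrightarrow> \<exists>s. (y, s) \<in> D \<and> \<psi> y < s + \<epsilon> / 2"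
    using compact_staircase_below[OF \<nu>.finite_measure_axioms \<nu>(2), of \<psi> M "\<epsilon> / 2" "\<epsilon> / (4 * M)"]
      \<psi> M \<open>0 < \<epsilon>\<close> by (auto simp: bB_def)
  have bdd: "bdd_above (snd ` D)" by (rule bdd_above_snd_compact[OF D(1)])
  define G where "G = lip_envelope M c D"
  have G_le: "G x \<le> M" for x
    unfolding G_def by (rule lip_envelope_le_cap[where c = c, OF c_nonneg bdd])
  have \<phi>_le_G: "\<phi> x \<le> G x" for x
    unfolding G_def
  proof (rule le_lip_envelope)
    show "\<phi> x \<le> M" using M(2)[of x] by simp
    show "\<phi> x \<le> c (x, y) - s" if "(y, s) \<in> D" for y s
      using D(2)[OF that] admissible[of x y] by linarith
  qed
  have G_abs: "\<bar>G x\<bar> \<le> M" for x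
    using G_le[of x] \<phi>_le_G[of x] M(2)[of x] by linarith
  have G: "G \<in> bB"
    unfolding G_def using G_abs[unfolded G_def]
    by (rule bBI[OF borel_measurable_lip_envelope[OF c_nonneg D(1) cn_lsc c_le_cn cn_lim]])
  have "G y + \<psi> y \<le> \<epsilon> / 2 + 2 * M * indicator U y" for y
  proof (cases "y \<in> U")
    case True
    then show ?thesis using G_abs[of y] M(3)[of y] \<open>0 < \<epsilon>\<close> by auto
  next
    case False
    then obtain s where "(y, s) \<in> D" "\<psi> y < s + \<epsilon> / 2" using near by blast
    moreover have "G y \<le> - s"
      unfolding G_def
      by (rule lip_envelope_at_support[where c = c, OF c_nonneg bdd c_diag \<open>(y, s) \<in> D\<close>])
    ultimately show ?thesis using False by simp
  qed
  then have "integral\<^sup>L \<nu> (\<lambda>y. G y + \<psi> y) \<le> \<epsilon> / 2 + 2 * M * measure \<nu> U"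
    using G \<psi> \<nu> U(1)
    by (intro \<nu>.integral_le_const_plus_indicator Bochner_Integration.integrable_add bB_integrable
        \<nu>.finite_measure_axioms) auto
  also have "\<dots> \<le> \<epsilon>"
    using U(2) M(1) by (simp add: field_simps)
  finally have "integral\<^sup>L \<nu> G + integral\<^sup>L \<nu> \<psi> \<le> \<epsilon>"
    using G \<psi> \<nu> by (simp add: bB_integrable \<nu>.finite_measure_axioms)
  moreover have "integral\<^sup>L \<mu> \<phi> \<le> integral\<^sup>L \<mu> G"
    using \<phi> G \<mu> \<phi>_le_G by (intro integral_mono bB_integrable)
  ultimately show ?thesis
    using that[OF G] lip_envelope_lipschitz[where c = c, OF c_nonneg c_tri bdd] by (simp add: G_def)
qed

theorem theorem1p2:
  fixes c :: "'a::polish_space \<times> 'a \<Rightarrow> real"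
    and cn :: "nat \<Rightarrow> 'a \<times> 'a \<Rightarrow> real"
    and \<mu> \<nu> :: "'a measure"
  assumes c_nonneg: "\<And>x y. c (x, y) \<ge> 0"
    and c_diag: "\<And>x. c (x, x) = 0"
    and c_tri: "\<And>x y z. c (x, z) \<le> c (x, y) + c (y, z)"
    and cn_lsc: "\<And>n. lsc (cn n)"
    and cn_nonneg: "\<And>n p. cn n p \<ge> 0"
    and cn_decr: "\<And>n p. cn (Suc n) p \<le> cn n p"
    and cn_lim: "\<And>p. (\<lambda>n. cn n p) \<longlonglongrightarrow> c p"
    and \<mu>_prob: "prob_space \<mu>" and \<mu>_borel: "sets \<mu> = sets borel"
    and \<nu>_prob: "prob_space \<nu>" and \<nu>_borel: "sets \<nu> = sets borel"
  shows "(SUP (\<phi>, \<psi>) \<in> {(\<phi>, \<psi>). \<phi> \<in> bB \<and> \<psi> \<in> bB \<and> (\<forall>x y. \<phi> x + \<psi> y \<le> c (x, y))}.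
            ereal (integral\<^sup>L \<mu> \<phi> + integral\<^sup>L \<nu> \<psi>))
       = (SUP \<phi> \<in> {\<phi>. \<phi> \<in> bB \<and> (\<forall>x y. \<phi> x - \<phi> y \<le> c (x, y))}.
            ereal (integral\<^sup>L \<mu> \<phi> - integral\<^sup>L \<nu> \<phi>))"
    (is "?L = ?R")
proof (rule antisym)
  have c_le_cn: "c p \<le> cn n p" for n p
    using cn_decr by (intro decseq_ge[OF _ cn_lim]) (simp add: decseq_Suc_iff)
  show "?L \<le> ?R"
  proof (rule SUP_le_SUP_epsilon, clarify)
    fix \<phi> \<psi> and \<epsilon> :: real
    assume "\<phi> \<in> bB" "\<psi> \<in> bB" "\<forall>x y. \<phi> x + \<psi> y \<le> c (x, y)" "0 < \<epsilon>"
    then obtain G where "G \<in> bB" "\<And>x y. G x - G y \<le> c (x, y)"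
      "integral\<^sup>L \<mu> \<phi> + integral\<^sup>L \<nu> \<psi> \<le> integral\<^sup>L \<mu> G - integral\<^sup>L \<nu> G + \<epsilon>"
      using admissible_pair_le_lipschitz_potential[OF c_nonneg c_diag c_tri cn_lsc c_le_cn cn_lim
          prob_space.finite_measure[OF \<mu>_prob] \<mu>_borel \<nu>_prob \<nu>_borel] by blast
    then show "\<exists>G\<in>{\<phi>. \<phi> \<in> bB \<and> (\<forall>x y. \<phi> x - \<phi> y \<le> c (x, y))}.
        ereal (integral\<^sup>L \<mu> \<phi> + integral\<^sup>L \<nu> \<psi>) \<le> ereal (integral\<^sup>L \<mu> G - integral\<^sup>L \<nu> G) + ereal \<epsilon>"
      by auto
  qed
  show "?R \<le> ?L"
  proof (rule SUP_least, clarify)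
    fix \<phi> assume "\<phi> \<in> bB" "\<forall>x y. \<phi> x - \<phi> y \<le> c (x, y)"
    then have "ereal (integral\<^sup>L \<mu> \<phi> + integral\<^sup>L \<nu> (\<lambda>x. - \<phi> x)) \<le> ?L"
      by (intro SUP_upper2[of "(\<phi>, \<lambda>x. - \<phi> x)"]) (auto simp: uminus_bB)
    then show "ereal (integral\<^sup>L \<mu> \<phi> - integral\<^sup>L \<nu> \<phi>) \<le> ?L" by simp
  qed
qed

end
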